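(* Let $\mathcal{A} \colon \mathbb{R}^n \to \mathbb{R}^m$ be a linear map with operator norm $\|\mathcal{A}\|$ (with respect to the Euclidean norms). Let $(\mathcal{D}_\theta)_{\theta \in \Theta}$ be a family of maps $\mathcal{D}_\theta \colon \mathbb{R}^n \to \mathbb{R}^n$, each of which is a contraction (Lipschitz with constant strictly less than $1$ in the Euclidean norm). Let $\Omega \colon \mathbb{R}^n \to \mathbb{R}^n$ be nonexpansive (Lipschitz with constant at most $1$). Let $s \in (0, 1/\|\mathcal{A}\|^2)$ and $\lambda \in (0,1)$. Define, for $\mathbf{x}, \mathbf{v} \in \mathbb{R}^n$ and $\mathbf{y} \in \mathbb{R}^m$, $$\mathcal{G}(\mathbf{x},\mathbf{y}) = \mathbf{x} - 2s\,\mathcal{A}^\top(\mathcal{A}\mathbf{x} - \mathbf{y}), \qquad \mathcal{N}_\theta(\mathbf{v}) = \Omega\bigl(\lambda\,\mathcal{D}_\theta(\mathbf{v}) + (1-\lambda)\,\mathbf{v}\bigr).$$ Then for every $\mathbf{y} \in \mathbb{R}^m$ and every $\theta \in \Theta$, the map $\mathbf{x} \mapsto \mathcal{N}_\theta(\mathcal{G}(\mathbf{x},\mathbf{y}))$ from $\mathbb{R}^n$ to $\mathbb{R}^n$ is a contraction and hence has exactly one fixed point $\mathbf{x}^\ast \in \mathbb{R}^n$. In particular, the map $\mathcal{B}_\theta \colon \mathbb{R}^m \to \mathbb{R}^n$, $\mathbf{y} \mapsto \mathbf{x}^\ast$, where $\mathbf{x}^\ast$ is the unique solution of $\mathbf{x}^\ast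 = \mathcal{N}_\theta(\mathcal{G}(\mathbf{x}^\ast,\mathbf{y}))$, is well defined.
   Context: $\mathcal{A}^\top$ denotes the transpose (adjoint) of $\mathcal{A}$. All norms on $\mathbb{R}^n$ and $\mathbb{R}^m$ are Euclidean, and $\|\mathcal{A}\|$ is the corresponding operator norm. *)

theory Defs
  imports "HOL-Analysis.Analysis"
begin

definition is_contraction :: "('a::metric_space \<Rightarrow> 'a) \<Rightarrow> bool" where
  "is_contraction f \<longleftrightarrow> (\<exists>L<1. L-lipschitz_on UNIV f)"

definition nonexpansive :: "('a::metric_space \<Rightarrow> 'a) \<Rightarrow> bool" where
  "nonexpansive f \<longleftrightarrow> 1-lipschitz_on UNIV f"

end

theory Submission
  imports Defs
begin

text \<open>The gradient step \<open>x \<mapsto> x - 2s A\<^sup>T(A x - y)\<close> is nonexpansive: its linear part satisfies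
  \<open>\<parallel>x - 2s A\<^sup>TA x\<parallel>\<^sup>2 = \<parallel>x\<parallel>\<^sup>2 - 4s \<parallel>A x\<parallel>\<^sup>2 + 4s\<^sup>2 \<parallel>A\<^sup>TA x\<parallel>\<^sup>2\<close>, and \<open>\<parallel>A\<^sup>TA x\<parallel> \<le> \<parallel>A\<parallel> \<parallel>A x\<parallel>\<close>
  together with \<open>s \<parallel>A\<parallel>\<^sup>2 \<le> 1\<close> makes the last two terms nonpositive in sum. The relaxed denoiser
  \<open>\<lambda> D\<^sub>\<theta> + (1 - \<lambda>) I\<close> is Lipschitz with constant \<open>\<lambda> L + 1 - \<lambda> < 1\<close>, so composing it with the
  nonexpansive maps \<open>\<Omega>\<close> and the gradient step yields a contraction, whose fixed point exists
  and is unique by Banach's theorem.\<close>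

lemma norm_adjoint_le:
  fixes f :: "'a::euclidean_space \<Rightarrow> 'b::euclidean_space"
  assumes "linear f"
  shows "norm (adjoint f y) \<le> onorm f * norm y"
proof -
  let ?z = "adjoint f y"
  have bl: "bounded_linear f" using assms by (simp add: linear_conv_bounded_linear)
  have "(norm ?z)\<^sup>2 = f ?z \<bullet> y"
    by (simp add: adjoint_works[OF assms] dot_square_norm[symmetric])
  also have "\<dots> \<le> norm (f ?z) * norm y" by (rule norm_cauchy_schwarz)
  also have "\<dots> \<le> onorm f * norm ?z * norm y"
    by (intro mult_right_mono onorm[OF bl]) simp
  finally have "norm ?z * norm ?z \<le> norm ?z * (onorm f * norm y)"
    by (simp add: power2_eq_square algebra_simps)
  then show ?thesis
    by (cases "norm ?z = 0") (auto simp: onorm_pos_le[OF bl])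
qed

lemma norm_gradient_step_le:
  fixes A :: "'a::euclidean_space \<Rightarrow> 'b::euclidean_space"
  assumes "linear A" and "0 \<le> s" and "s * (onorm A)\<^sup>2 \<le> 1"
  shows "norm (x - (2 * s) *\<^sub>R adjoint A (A x)) \<le> norm x"
proof -
  let ?z = "adjoint A (A x)"
  have "(norm ?z)\<^sup>2 \<le> (onorm A)\<^sup>2 * (norm (A x))\<^sup>2"
    using norm_adjoint_le[OF assms(1), of "A x"]
    by (metis norm_ge_zero power_mono power_mult_distrib)
  then have "s * (norm ?z)\<^sup>2 \<le> (s * (onorm A)\<^sup>2) * (norm (A x))\<^sup>2"
    using assms(2) by (simp add: mult_left_mono mult.assoc)
  also have "\<dots> \<le> (norm (A x))\<^sup>2"
    using assms(2,3) by (intro mult_left_le_one_le) auto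
  finally have z_le: "s * (norm ?z)\<^sup>2 \<le> (norm (A x))\<^sup>2" .
  have "(norm (x - (2 * s) *\<^sub>R ?z))\<^sup>2 = (x - (2 * s) *\<^sub>R ?z) \<bullet> (x - (2 * s) *\<^sub>R ?z)"
    by (rule power2_norm_eq_inner)
  also have "\<dots> = x \<bullet> x - 4 * s * (x \<bullet> ?z) + 4 * s * (s * (?z \<bullet> ?z))"
    by (simp add: inner_diff_left inner_diff_right inner_commute algebra_simps)
  also have "\<dots> = (norm x)\<^sup>2 - 4 * s * ((norm (A x))\<^sup>2 - s * (norm ?z)\<^sup>2)"
    by (simp add: adjoint_clauses(1)[OF assms(1)] power2_norm_eq_inner algebra_simps)
  also have "\<dots> \<le> (norm x)\<^sup>2"
    using z_le assms(2) by simp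
  finally show ?thesis
    by (simp add: power2_le_iff_abs_le)
qed

lemma nonexpansive_gradient_step:
  fixes A :: "'a::euclidean_space \<Rightarrow> 'b::euclidean_space"
  assumes "linear A" and "0 \<le> s" and "s * (onorm A)\<^sup>2 \<le> 1"
  shows "nonexpansive (\<lambda>x. x - (2 * s) *\<^sub>R adjoint A (A x - y))"
  unfolding nonexpansive_def
proof (rule lipschitz_onI)
  fix a b :: 'a
  have "adjoint A (A a - y) - adjoint A (A b - y) = adjoint A (A (a - b))"
    by (simp add: linear_diff[OF adjoint_linear[OF assms(1)], symmetric] linear_diff[OF assms(1)])
  then have "(a - (2 * s) *\<^sub>R adjoint A (A a - y)) - (b - (2 * s) *\<^sub>R adjoint A (A b - y))
      = (a - b) - (2 * s) *\<^sub>R adjoint A (A (a - b))"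
    by (simp add: algebra_simps flip: scaleR_diff_right)
  then show "dist (a - (2 * s) *\<^sub>R adjoint A (A a - y)) (b - (2 * s) *\<^sub>R adjoint A (A b - y))
      \<le> 1 * dist a b"
    using norm_gradient_step_le[OF assms, of "a - b"] by (simp only: dist_norm mult_1)
qed simp

lemma is_contraction_relaxation:
  fixes f :: "'a::real_normed_vector \<Rightarrow> 'a"
  assumes "is_contraction f" and "0 < lam" and "lam \<le> 1"
  shows "is_contraction (\<lambda>v. lam *\<^sub>R f v + (1 - lam) *\<^sub>R v)"
proof -
  obtain L where "L < 1" and L: "L-lipschitz_on UNIV f"
    using assms(1) by (auto simp: is_contraction_def)
  have "(lam * L + (1 - lam) * 1)-lipschitz_on UNIV (\<lambda>v. lam *\<^sub>R f v + (1 - lam) *\<^sub>R v)"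
    using assms(2,3)
    by (intro lipschitz_on_add lipschitz_on_cmult_nonneg L lipschitz_on_id) auto
  moreover have "lam * L + (1 - lam) * 1 < 1"
    using \<open>L < 1\<close> assms(2) by simp
  ultimately show ?thesis
    unfolding is_contraction_def by blast
qed

lemma is_contraction_compose_nonexpansive_left:
  assumes "nonexpansive g" and "is_contraction f"
  shows "is_contraction (\<lambda>x. g (f x))"
proof -
  obtain L where "L < 1" and "L-lipschitz_on UNIV f"
    using assms(2) by (auto simp: is_contraction_def)
  then have "(1 * L)-lipschitz_on UNIV (\<lambda>x. g (f x))"
    using assms(1) by (intro lipschitz_on_compose2) (auto simp: nonexpansive_def intro: lipschitz_on_subset)
  with \<open>L < 1\<close> show ?thesis
    unfolding is_contraction_def by auto
qed

lemma is_contraction_compose_nonexpansive_right: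
  assumes "is_contraction f" and "nonexpansive h"
  shows "is_contraction (\<lambda>x. f (h x))"
proof -
  obtain L where "L < 1" and "L-lipschitz_on UNIV f"
    using assms(1) by (auto simp: is_contraction_def)
  then have "(L * 1)-lipschitz_on UNIV (\<lambda>x. f (h x))"
    using assms(2) by (intro lipschitz_on_compose2) (auto simp: nonexpansive_def intro: lipschitz_on_subset)
  with \<open>L < 1\<close> show ?thesis
    unfolding is_contraction_def by auto
qed

lemma is_contraction_unique_fixpoint:
  fixes f :: "'a::complete_space \<Rightarrow> 'a"
  assumes "is_contraction f"
  shows "\<exists>!x. f x = x"
proof -
  obtain L where "L < 1" and L: "L-lipschitz_on UNIV f"
    using assms by (auto simp: is_contraction_def)
  show ?thesis
    using lipschitz_on_nonneg[OF L] \<open>L < 1\<close> lipschitz_onD[OF L]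
    by (intro banach_fix_type) auto
qed

theorem mainTheorem1:
  fixes A :: "real ^ 'n \<Rightarrow> real ^ 'm"
    and D :: "'t \<Rightarrow> real ^ 'n \<Rightarrow> real ^ 'n"
    and \<Theta> :: "'t set"
    and \<Omega> :: "real ^ 'n \<Rightarrow> real ^ 'n"
    and s lam :: real
  assumes linA: "linear A"
    and contr: "\<forall>\<theta>\<in>\<Theta>. is_contraction (D \<theta>)"
    and nonexp: "nonexpansive \<Omega>"
    and s_pos: "0 < s" and s_bound: "s * (onorm A)\<^sup>2 < 1"
    and lam: "0 < lam" "lam < 1"
  defines "G \<equiv> (\<lambda>x y. x - (2 * s) *\<^sub>R adjoint A (A x - y))"
    and "N \<equiv> (\<lambda>\<theta> v. \<Omega> (lam *\<^sub>R D \<theta> v + (1 - lam) *\<^sub>R v))"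
  shows "\<forall>y. \<forall>\<theta>\<in>\<Theta>. is_contraction (\<lambda>x. N \<theta> (G x y)) \<and> (\<exists>!x. x = N \<theta> (G x y))"
proof (intro allI ballI)
  fix y \<theta> assume "\<theta> \<in> \<Theta>"
  have "is_contraction (N \<theta>)"
    unfolding N_def using contr \<open>\<theta> \<in> \<Theta>\<close> lam
    by (intro is_contraction_compose_nonexpansive_left[OF nonexp] is_contraction_relaxation) auto
  moreover have "nonexpansive (\<lambda>x. G x y)"
    unfolding G_def using linA s_pos s_bound by (intro nonexpansive_gradient_step) auto
  ultimately have "is_contraction (\<lambda>x. N \<theta> (G x y))"
    by (rule is_contraction_compose_nonexpansive_right)
  then show "is_contraction (\<lambda>x. N \<theta> (G x y)) \<and> (\<exists>!x. x = N \<theta> (G x y))"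
    using is_contraction_unique_fixpoint by (metis (no_types, lifting))
qed

end
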